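(* Let $U:\mathbb{C}^*\to\mathbb{C}$ be a reasonable expansion with unique restrictions between locally small categories, and assume that all morphisms in $\mathbb{C}$ are monomorphisms. Then for every $A\in\mathrm{Ob}(\mathbb{C})$, $$t_{\mathbb{C}}(A)\le\sum_{\mathcal{A}\in U^{-1}(A)}t_{\mathbb{C}^*}(\mathcal{A}).$$ Consequently, if $U^{-1}(A)$ is finite and $t_{\mathbb{C}^*}(\mathcal{A})<\infty$ for all $\mathcal{A}\in U^{-1}(A)$, then $t_{\mathbb{C}}(A)<\infty$.
   Context: An expansion of $\mathbb{C}$ is a category $\mathbb{C}^*$ with a functor $U:\mathbb{C}^*\to\mathbb{C}$ surjective on objects and injective on hom-sets; we regard $\hom_{\mathbb{C}^*}(\mathcal{A},\mathcal{B})\subseteq\hom_{\mathbb{C}}(U\mathcal{A},U\mathcal{B})$, and $U^{-1}(A)=\{\mathcal{A}:U(\mathcal{A})=A\}$. $U$ is reasonable if for every $e\in\hom(A,B)$ and $\mathcal{A}\in U^{-1}(A)$ there is $\mathcal{B}\in U^{-1}(B)$ with $e\in\hom(\mathcal{A},\mathcal{B})$; it has unique restrictions if for every $\mathcal{B}\in\mathrm{Ob}(\mathbb{C}^* )$ and $e\in\hom(A,U(\mathcal{B}))$ there is exactly one $\mathcal{A}\in U^{-1}(A)$ with $e\in\hom(\mathcal{A},\mathcal{B})$. In a category $\mathbb{D}$: $C\to(B)^A_{k,t}$ means that for every $\chi:\hom(A,C)\to\{0,\dots,k-1\}$ there is $w\in\hom(B,C)$ with $|\chi(w\cdot\hom(A,B))|\le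 t$; $t_{\mathbb{D}}(A)$ is the least positive $n$ such that for all $k\ge2$ and all $B$ there is $C$ with $C\to(B)^A_{k,n}$, and $\infty$ otherwise. A sum with an infinite term or infinitely many terms is $\infty$. *)

theory Defs
  imports Main "HOL-Library.Extended_Nat"
begin

text \<open>A (locally small) category, with objects of type 'o and morphisms of type 'm.
  Hom sets are indexed by pairs of objects (they need not be disjoint as sets of
  'm-values); comp g f is "g after f".\<close>
record ('o, 'm) cat =
  Ob :: "'o set"
  Hom :: "'o \<Rightarrow> 'o \<Rightarrow> 'm set"
  comp :: "'m \<Rightarrow> 'm \<Rightarrow> 'm"
  ident :: "'o \<Rightarrow> 'm"

definition category :: "('o, 'm) cat \<Rightarrow> bool" where
  "category C \<longleftrightarrow>
     (\<forall>A\<in>Ob C. ident C A \<in> Hom C A A) \<and>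
     (\<forall>A\<in>Ob C. \<forall>B\<in>Ob C. \<forall>D\<in>Ob C. \<forall>f\<in>Hom C A B. \<forall>g\<in>Hom C B D.
        comp C g f \<in> Hom C A D) \<and>
     (\<forall>A\<in>Ob C. \<forall>B\<in>Ob C. \<forall>D\<in>Ob C. \<forall>E\<in>Ob C.
        \<forall>f\<in>Hom C A B. \<forall>g\<in>Hom C B D. \<forall>h\<in>Hom C D E.
        comp C h (comp C g f) = comp C (comp C h g) f) \<and>
     (\<forall>A\<in>Ob C. \<forall>B\<in>Ob C. \<forall>f\<in>Hom C A B.
        comp C (ident C B) f = f \<and> comp C f (ident C A) = f)"

definition all_mono :: "('o, 'm) cat \<Rightarrow> bool" where
  "all_mono C \<longleftrightarrow>
     (\<forall>A\<in>Ob C. \<forall>B\<in>Ob C. \<forall>D\<in>Ob C. \<forall>f\<in>Hom C B D. \<forall>g\<in>Hom C A B. \<forall>h\<in>Hom C A B.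
        comp C f g = comp C f h \<longrightarrow> g = h)"

text \<open>Expansion: U is surjective on objects; following the paper's convention
  hom_{C*}(A*,B*) is a subset of hom_C(U A*, U B*) (so U is the inclusion on
  morphisms, hence injective on hom sets), and U preserves composition and identities.\<close>
definition expansion :: "('o, 'm) cat \<Rightarrow> ('p, 'm) cat \<Rightarrow> ('p \<Rightarrow> 'o) \<Rightarrow> bool" where
  "expansion C Cs U \<longleftrightarrow>
     category C \<and> category Cs \<and> U ` Ob Cs = Ob C \<and>
     (\<forall>A\<in>Ob Cs. \<forall>B\<in>Ob Cs. Hom Cs A B \<subseteq> Hom C (U A) (U B)) \<and>
     (\<forall>A\<in>Ob Cs. ident Cs A = ident C (U A)) \<and>
     (\<forall>A\<in>Ob Cs. \<forall>B\<in>Ob Cs. \<forall>D\<in>Ob Cs. \<forall>f\<in>Hom Cs A B. \<forall>g\<in>Hom Cs B D.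
        comp Cs g f = comp C g f)"

definition preimage_ob :: "('p, 'm) cat \<Rightarrow> ('p \<Rightarrow> 'o) \<Rightarrow> 'o \<Rightarrow> 'p set" where
  "preimage_ob Cs U A = {As \<in> Ob Cs. U As = A}"

definition reasonable :: "('o, 'm) cat \<Rightarrow> ('p, 'm) cat \<Rightarrow> ('p \<Rightarrow> 'o) \<Rightarrow> bool" where
  "reasonable C Cs U \<longleftrightarrow>
     (\<forall>A\<in>Ob C. \<forall>B\<in>Ob C. \<forall>e\<in>Hom C A B. \<forall>As\<in>preimage_ob Cs U A.
        \<exists>Bs\<in>preimage_ob Cs U B. e \<in> Hom Cs As Bs)"

definition unique_restrictions :: "('o, 'm) cat \<Rightarrow> ('p, 'm) cat \<Rightarrow> ('p \<Rightarrow> 'o) \<Rightarrow> bool" where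
  "unique_restrictions C Cs U \<longleftrightarrow>
     (\<forall>Bs\<in>Ob Cs. \<forall>A\<in>Ob C. \<forall>e\<in>Hom C A (U Bs).
        \<exists>!As. As \<in> preimage_ob Cs U A \<and> e \<in> Hom Cs As Bs)"

text \<open>C \<rightarrow> (B)^A_{k,t}: colourings are functions on hom(A,C) with values in {0..k-1}.\<close>
definition arrows :: "('o, 'm) cat \<Rightarrow> 'o \<Rightarrow> 'o \<Rightarrow> 'o \<Rightarrow> nat \<Rightarrow> nat \<Rightarrow> bool" where
  "arrows D C B A k t \<longleftrightarrow>
     (\<forall>\<chi> :: 'm \<Rightarrow> nat. (\<forall>f\<in>Hom D A C. \<chi> f < k) \<longrightarrow>
        (\<exists>w\<in>Hom D B C. card (\<chi> ` ((\<lambda>f. comp D w f) ` Hom D A B)) \<le> t))"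

definition small_ramsey_ok :: "('o, 'm) cat \<Rightarrow> 'o \<Rightarrow> nat \<Rightarrow> bool" where
  "small_ramsey_ok D A n \<longleftrightarrow>
     (\<forall>k\<ge>2. \<forall>B\<in>Ob D. \<exists>C\<in>Ob D. arrows D C B A k n)"

definition ramsey_deg :: "('o, 'm) cat \<Rightarrow> 'o \<Rightarrow> enat" where
  "ramsey_deg D A =
     (if \<exists>n>0. small_ramsey_ok D A n
      then enat (LEAST n. n > 0 \<and> small_ramsey_ok D A n) else \<infinity>)"

definition esum :: "('a \<Rightarrow> enat) \<Rightarrow> 'a set \<Rightarrow> enat" where
  "esum f S = (if finite S then sum f S else \<infinity>)"

end

theory Submission
  imports Defs
begin

text \<open>Let \<open>P = U\<^sup>-\<^sup>1(A)\<close> be finite with \<open>t\<^sub>\<A> = t(\<A>)\<close> finite for every \<open>\<A> \<in> P\<close>.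
  Applying the Ramsey property of the objects \<open>\<A> \<in> P\<close> one after another yields, for every
  \<open>\<B>\<close>, a single object \<open>\<C>\<close> of \<open>\<C>\<^sup>*\<close> such that every colouring of the arrows into \<open>\<C>\<close> admits one
  \<open>w : \<B> \<rightarrow> \<C>\<close> on which each \<open>w \<cdot> hom(\<A>, \<B>)\<close> sees at most \<open>t\<^sub>\<A>\<close> colours.  By unique
  restrictions, \<open>hom(A, U \<B>)\<close> is the union of the sets \<open>hom(\<A>, \<B>)\<close> with \<open>\<A> \<in> P\<close>, so \<open>U \<C>\<close>
  witnesses \<open>U \<C> \<rightarrow> (U \<B>)\<^sup>A\<^sub>k\<^sub>,\<^sub>t\<close> with \<open>t = \<Sum>\<^sub>\<A> t\<^sub>\<A>\<close>.\<close>

lemma category_comp_closed: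
  assumes "category D" "X \<in> Ob D" "Y \<in> Ob D" "Z \<in> Ob D" "f \<in> Hom D X Y" "g \<in> Hom D Y Z"
  shows "comp D g f \<in> Hom D X Z"
  using assms unfolding category_def by blast

lemma category_comp_assoc:
  assumes "category D" "X \<in> Ob D" "Y \<in> Ob D" "Z \<in> Ob D" "W \<in> Ob D"
    and "f \<in> Hom D X Y" "g \<in> Hom D Y Z" "h \<in> Hom D Z W"
  shows "comp D h (comp D g f) = comp D (comp D h g) f"
proof -
  have "\<forall>X\<in>Ob D. \<forall>Y\<in>Ob D. \<forall>Z\<in>Ob D. \<forall>W\<in>Ob D. \<forall>f\<in>Hom D X Y. \<forall>g\<in>Hom D Y Z. \<forall>h\<in>Hom D Z W.
      comp D h (comp D g f) = comp D (comp D h g) f"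
    using assms(1) unfolding category_def by (elim conjE)
  then show ?thesis
    using assms(2-8) by blast
qed

lemma category_ident_Hom: "category D \<Longrightarrow> X \<in> Ob D \<Longrightarrow> ident D X \<in> Hom D X X"
  unfolding category_def by blast

lemma expansion_categories: "expansion C Cs U \<Longrightarrow> category C \<and> category Cs"
  unfolding expansion_def by blast

lemma expansion_image_Ob: "expansion C Cs U \<Longrightarrow> U ` Ob Cs = Ob C"
  unfolding expansion_def by blast

lemma expansion_Hom_subset:
  "expansion C Cs U \<Longrightarrow> X \<in> Ob Cs \<Longrightarrow> Y \<in> Ob Cs \<Longrightarrow> Hom Cs X Y \<subseteq> Hom C (U X) (U Y)"
  unfolding expansion_def by blast

lemma expansion_comp:
  assumes "expansion C Cs U" "X \<in> Ob Cs" "Y \<in> Ob Cs" "Z \<in> Ob Cs"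
    and "f \<in> Hom Cs X Y" "g \<in> Hom Cs Y Z"
  shows "comp Cs g f = comp C g f"
  using assms unfolding expansion_def by blast

lemma preimage_ob_nonempty:
  assumes "expansion C Cs U" "A \<in> Ob C"
  shows "preimage_ob Cs U A \<noteq> {}"
proof -
  obtain As where "As \<in> Ob Cs" "U As = A"
    using assms expansion_image_Ob by (metis imageE)
  then show ?thesis
    unfolding preimage_ob_def by blast
qed

lemma Hom_eq_UN_restrictions:
  assumes "expansion C Cs U" "unique_restrictions C Cs U" "A \<in> Ob C" "B \<in> Ob Cs"
  shows "Hom C A (U B) = (\<Union>As\<in>preimage_ob Cs U A. Hom Cs As B)"
proof
  show "Hom C A (U B) \<subseteq> (\<Union>As\<in>preimage_ob Cs U A. Hom Cs As B)"
  proof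
    fix e assume "e \<in> Hom C A (U B)"
    then have "\<exists>!As. As \<in> preimage_ob Cs U A \<and> e \<in> Hom Cs As B"
      using assms(2-4) unfolding unique_restrictions_def by blast
    then show "e \<in> (\<Union>As\<in>preimage_ob Cs U A. Hom Cs As B)"
      by blast
  qed
  show "(\<Union>As\<in>preimage_ob Cs U A. Hom Cs As B) \<subseteq> Hom C A (U B)"
    using expansion_Hom_subset[OF assms(1) _ assms(4)] unfolding preimage_ob_def by blast
qed

definition joint_arrows ::
  "('o, 'm) cat \<Rightarrow> 'o \<Rightarrow> 'o \<Rightarrow> 'o set \<Rightarrow> nat \<Rightarrow> ('o \<Rightarrow> nat) \<Rightarrow> bool" where
  "joint_arrows D C B S k t \<longleftrightarrow>
     (\<forall>\<chi> :: 'm \<Rightarrow> nat. (\<forall>A\<in>S. \<forall>f\<in>Hom D A C. \<chi> f < k) \<longrightarrow>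
        (\<exists>w\<in>Hom D B C. \<forall>A\<in>S. card (\<chi> ` (\<lambda>f. comp D w f) ` Hom D A B) \<le> t A))"

lemma joint_arrows_empty: "category D \<Longrightarrow> B \<in> Ob D \<Longrightarrow> joint_arrows D B B {} k t"
  unfolding joint_arrows_def using category_ident_Hom by fast

lemma card_colours_comp_le:
  fixes D :: "('o, 'm) cat" and \<chi> :: "'m \<Rightarrow> nat"
  assumes D: "category D" and obs: "A \<in> Ob D" "B \<in> Ob D" "C' \<in> Ob D" "C \<in> Ob D"
    and w1: "w1 \<in> Hom D C' C" and w2: "w2 \<in> Hom D B C'"
    and \<chi>: "\<forall>f\<in>Hom D A C. \<chi> f < k"
  shows "card (\<chi> ` (\<lambda>f. comp D (comp D w1 w2) f) ` Hom D A B)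
    \<le> card (\<chi> ` (\<lambda>f. comp D w1 f) ` Hom D A C')"
proof (rule card_mono)
  show "finite (\<chi> ` (\<lambda>f. comp D w1 f) ` Hom D A C')"
  proof (rule finite_subset)
    show "\<chi> ` (\<lambda>f. comp D w1 f) ` Hom D A C' \<subseteq> {..<k}"
      using \<chi> category_comp_closed[OF D obs(1,3,4) _ w1] by auto
  qed simp
  have "(\<lambda>f. comp D (comp D w1 w2) f) ` Hom D A B \<subseteq> (\<lambda>f. comp D w1 f) ` Hom D A C'"
  proof (rule image_subsetI)
    fix f assume f: "f \<in> Hom D A B"
    then have "comp D (comp D w1 w2) f = comp D w1 (comp D w2 f)"
      using category_comp_assoc[OF D obs f w2 w1] by simp
    moreover have "comp D w2 f \<in> Hom D A C'"
      using category_comp_closed[OF D obs(1-3) f w2] .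
    ultimately show "comp D (comp D w1 w2) f \<in> (\<lambda>f. comp D w1 f) ` Hom D A C'"
      by simp
  qed
  then show "\<chi> ` (\<lambda>f. comp D (comp D w1 w2) f) ` Hom D A B \<subseteq> \<chi> ` (\<lambda>f. comp D w1 f) ` Hom D A C'"
    by (rule image_mono)
qed

lemma joint_arrows_insert:
  fixes D :: "('o, 'm) cat"
  assumes D: "category D" and obs: "insert A S \<subseteq> Ob D" "B \<in> Ob D" "C' \<in> Ob D" "C \<in> Ob D"
    and joint: "joint_arrows D C' B S k t"
    and arr: "arrows D C C' A k (t A)"
  shows "joint_arrows D C B (insert A S) k t"
  unfolding joint_arrows_def
proof (intro allI impI)
  have Ob_X: "X \<in> Ob D" if "X \<in> insert A S" for X
    using obs(1) that by blast
  fix \<chi> :: "'m \<Rightarrow> nat"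
  assume \<chi>: "\<forall>X\<in>insert A S. \<forall>f\<in>Hom D X C. \<chi> f < k"
  then obtain w1 where w1: "w1 \<in> Hom D C' C"
    and colours_A: "card (\<chi> ` (\<lambda>f. comp D w1 f) ` Hom D A C') \<le> t A"
    using spec[OF arr[unfolded arrows_def], of \<chi>] \<chi> by blast
  have \<chi>_w1: "\<chi> (comp D w1 f) < k" if "X \<in> insert A S" "f \<in> Hom D X C'" for X f
    using \<chi> that category_comp_closed[OF D Ob_X[OF that(1)] obs(3,4) that(2) w1] by blast
  \<comment> \<open>pull \<open>\<chi>\<close> back along \<open>w1\<close>: the witness for \<open>S\<close> under \<open>\<chi>'\<close>, followed by \<open>w1\<close>, also works for \<open>A\<close>\<close>
  define \<chi>' where "\<chi>' f = \<chi> (comp D w1 f)" for f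
  have "\<forall>X\<in>S. \<forall>f\<in>Hom D X C'. \<chi>' f < k"
    unfolding \<chi>'_def using \<chi>_w1 by blast
  then obtain w2 where w2: "w2 \<in> Hom D B C'"
    and colours_S: "\<forall>X\<in>S. card (\<chi>' ` (\<lambda>f. comp D w2 f) ` Hom D X B) \<le> t X"
    using spec[OF joint[unfolded joint_arrows_def], of \<chi>'] by blast
  have comp_w: "comp D (comp D w1 w2) f = comp D w1 (comp D w2 f)"
    if "X \<in> insert A S" "f \<in> Hom D X B" for X f
    using category_comp_assoc[OF D Ob_X[OF that(1)] obs(2-4) that(2) w2 w1] by simp
  show "\<exists>w\<in>Hom D B C. \<forall>X\<in>insert A S. card (\<chi> ` (\<lambda>f. comp D w f) ` Hom D X B) \<le> t X"
  proof (intro bexI ballI)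
    show "comp D w1 w2 \<in> Hom D B C"
      using category_comp_closed[OF D obs(2-4) w2 w1] .
    fix X assume X: "X \<in> insert A S"
    show "card (\<chi> ` (\<lambda>f. comp D (comp D w1 w2) f) ` Hom D X B) \<le> t X"
    proof (cases "X = A")
      case True
      have "card (\<chi> ` (\<lambda>f. comp D (comp D w1 w2) f) ` Hom D A B)
          \<le> card (\<chi> ` (\<lambda>f. comp D w1 f) ` Hom D A C')"
        using \<chi> by (intro card_colours_comp_le[OF D Ob_X[OF insertI1] obs(2-4) w1 w2]) blast
      then show ?thesis
        using True colours_A by simp
    next
      case False
      have "\<chi> ` (\<lambda>f. comp D (comp D w1 w2) f) ` Hom D X B = \<chi>' ` (\<lambda>f. comp D w2 f) ` Hom D X B"
        unfolding \<chi>'_def image_image by (rule image_cong) (simp_all add: comp_w[OF X])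
      then show ?thesis
        using colours_S X False by simp
    qed
  qed
qed

lemma joint_arrows_exists:
  assumes D: "category D" and S: "finite S" "S \<subseteq> Ob D"
    and ok: "\<forall>A\<in>S. small_ramsey_ok D A (t A)"
    and k: "k \<ge> 2" and B: "B \<in> Ob D"
  shows "\<exists>C\<in>Ob D. joint_arrows D C B S k t"
  using S ok
proof (induction S rule: finite_induct)
  case empty
  show ?case
    using joint_arrows_empty[OF D B] B by blast
next
  case (insert A S)
  then obtain C' where C': "C' \<in> Ob D" "joint_arrows D C' B S k t"
    by blast
  with insert.prems k obtain C where "C \<in> Ob D" "arrows D C C' A k (t A)"
    unfolding small_ramsey_ok_def by blast
  with C' show ?case
    using joint_arrows_insert[OF D insert.prems(1) B] by blast
qed

lemma small_ramsey_ok_sum_preimage: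
  fixes C :: "('o, 'm) cat" and Cs :: "('p, 'm) cat"
  assumes exp: "expansion C Cs U" and ur: "unique_restrictions C Cs U" and A: "A \<in> Ob C"
    and fin: "finite (preimage_ob Cs U A)"
    and ok: "\<forall>As\<in>preimage_ob Cs U A. small_ramsey_ok Cs As (t As)"
  shows "small_ramsey_ok C A (sum t (preimage_ob Cs U A))"
  unfolding small_ramsey_ok_def
proof (intro allI impI ballI)
  let ?P = "preimage_ob Cs U A"
  fix k :: nat and B assume k: "2 \<le> k" and B: "B \<in> Ob C"
  have "B \<in> U ` Ob Cs"
    using B expansion_image_Ob[OF exp] by simp
  then obtain Bs where Bs: "Bs \<in> Ob Cs" "U Bs = B"
    by blast
  have P: "?P \<subseteq> Ob Cs"
    unfolding preimage_ob_def by blast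
  obtain Cs' where Cs': "Cs' \<in> Ob Cs" and joint: "joint_arrows Cs Cs' Bs ?P k t"
    using joint_arrows_exists[OF _ fin P ok k Bs(1)] expansion_categories[OF exp] by blast
  have "arrows C (U Cs') B A k (sum t ?P)"
    unfolding arrows_def
  proof (intro allI impI)
    fix \<chi> :: "'m \<Rightarrow> nat"
    assume "\<forall>f\<in>Hom C A (U Cs'). \<chi> f < k"
    then have "\<forall>As\<in>?P. \<forall>f\<in>Hom Cs As Cs'. \<chi> f < k"
      by (simp add: Hom_eq_UN_restrictions[OF exp ur A Cs'])
    then obtain w where w: "w \<in> Hom Cs Bs Cs'"
      and colours: "\<forall>As\<in>?P. card (\<chi> ` (\<lambda>f. comp Cs w f) ` Hom Cs As Bs) \<le> t As"
      using spec[OF joint[unfolded joint_arrows_def], of \<chi>] by blast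
    have comp_w: "(\<lambda>f. comp Cs w f) ` Hom Cs As Bs = (\<lambda>f. comp C w f) ` Hom Cs As Bs"
      if "As \<in> ?P" for As
      using expansion_comp[OF exp _ Bs(1) Cs' _ w] that P by (auto intro!: image_cong)
    have "\<chi> ` (\<lambda>f. comp C w f) ` Hom C A B = (\<Union>As\<in>?P. \<chi> ` (\<lambda>f. comp Cs w f) ` Hom Cs As Bs)"
      using Hom_eq_UN_restrictions[OF exp ur A Bs(1)] comp_w Bs(2) by (simp add: image_UN)
    then have "card (\<chi> ` (\<lambda>f. comp C w f) ` Hom C A B)
        \<le> (\<Sum>As\<in>?P. card (\<chi> ` (\<lambda>f. comp Cs w f) ` Hom Cs As Bs))"
      using card_UN_le[OF fin] by simp
    also have "\<dots> \<le> sum t ?P"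
      using colours by (intro sum_mono) blast
    finally show "\<exists>w\<in>Hom C B (U Cs'). card (\<chi> ` (\<lambda>f. comp C w f) ` Hom C A B) \<le> sum t ?P"
      using w expansion_Hom_subset[OF exp Bs(1) Cs'] Bs(2) by blast
  qed
  moreover have "U Cs' \<in> Ob C"
    using Cs' expansion_image_Ob[OF exp] by blast
  ultimately show "\<exists>C'\<in>Ob C. arrows C C' B A k (sum t ?P)"
    by blast
qed

lemma ramsey_deg_le_enat: "0 < n \<Longrightarrow> small_ramsey_ok D A n \<Longrightarrow> ramsey_deg D A \<le> enat n"
  unfolding ramsey_deg_def by (auto intro: Least_le)

lemma ramsey_deg_finiteE:
  assumes "ramsey_deg D A < \<infinity>"
  obtains n where "ramsey_deg D A = enat n" "0 < n" "small_ramsey_ok D A n"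
proof -
  have ex: "\<exists>n>0. small_ramsey_ok D A n"
    using assms unfolding ramsey_deg_def by (auto split: if_splits)
  then have "0 < (LEAST n. 0 < n \<and> small_ramsey_ok D A n)
      \<and> small_ramsey_ok D A (LEAST n. 0 < n \<and> small_ramsey_ok D A n)"
    by (rule LeastI_ex)
  with ex show ?thesis
    using that unfolding ramsey_deg_def by simp
qed

lemma ramsey_deg_finite_choice:
  assumes "\<forall>A\<in>S. ramsey_deg D A < \<infinity>"
  obtains t where "\<forall>A\<in>S. ramsey_deg D A = enat (t A) \<and> 0 < t A \<and> small_ramsey_ok D A (t A)"
proof -
  have "\<forall>A\<in>S. \<exists>n. ramsey_deg D A = enat n \<and> 0 < n \<and> small_ramsey_ok D A n"
  proof
    fix A assume "A \<in> S"
    with assms have "ramsey_deg D A < \<infinity>"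
      by blast
    then obtain n where "ramsey_deg D A = enat n" "0 < n" "small_ramsey_ok D A n"
      by (rule ramsey_deg_finiteE)
    then show "\<exists>n. ramsey_deg D A = enat n \<and> 0 < n \<and> small_ramsey_ok D A n"
      by blast
  qed
  then obtain t where "\<forall>A\<in>S. ramsey_deg D A = enat (t A) \<and> 0 < t A \<and> small_ramsey_ok D A (t A)"
    by (rule bchoice[THEN exE])
  then show ?thesis
    by (rule that)
qed

lemma esum_enat: "finite S \<Longrightarrow> esum (\<lambda>x. enat (f x)) S = enat (sum f S)"
  unfolding esum_def by (simp flip: of_nat_eq_enat)

lemma esum_eq_infinity:
  assumes "\<not> (finite S \<and> (\<forall>x\<in>S. f x < \<infinity>))"
  shows "esum f S = \<infinity>"
proof (cases "finite S")
  case True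
  with assms obtain x where "x \<in> S" "f x = \<infinity>"
    by auto
  with True have "\<infinity> \<le> sum f S"
    by (metis member_le_sum zero_le)
  with True show ?thesis
    unfolding esum_def by (simp add: top_unique)
qed (simp add: esum_def)

lemma ramsey_deg_le_esum_preimage:
  fixes C :: "('o, 'm) cat" and Cs :: "('p, 'm) cat"
  assumes exp: "expansion C Cs U" and ur: "unique_restrictions C Cs U" and A: "A \<in> Ob C"
    and fin: "finite (preimage_ob Cs U A)"
    and degs: "\<forall>As\<in>preimage_ob Cs U A. ramsey_deg Cs As < \<infinity>"
  shows "ramsey_deg C A \<le> esum (ramsey_deg Cs) (preimage_ob Cs U A)
    \<and> esum (ramsey_deg Cs) (preimage_ob Cs U A) < \<infinity>"
proof -
  let ?P = "preimage_ob Cs U A"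
  obtain t where t: "\<forall>As\<in>?P. ramsey_deg Cs As = enat (t As) \<and> 0 < t As \<and> small_ramsey_ok Cs As (t As)"
    using ramsey_deg_finite_choice[OF degs] by blast
  obtain As where As: "As \<in> ?P"
    using preimage_ob_nonempty[OF exp A] by blast
  have "0 < sum t ?P"
    using fin t As by (intro sum_pos2[OF _ As]) auto
  moreover have "small_ramsey_ok C A (sum t ?P)"
    using t by (intro small_ramsey_ok_sum_preimage[OF exp ur A fin]) blast
  ultimately have "ramsey_deg C A \<le> enat (sum t ?P)"
    by (rule ramsey_deg_le_enat)
  moreover have "esum (ramsey_deg Cs) ?P = esum (\<lambda>As. enat (t As)) ?P"
    unfolding esum_def using t by (auto intro!: sum.cong)
  moreover have "\<dots> = enat (sum t ?P)"
    using fin by (rule esum_enat)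
  ultimately show ?thesis
    by simp
qed

theorem theorem6p1:
  fixes C :: "('o, 'm) cat" and Cs :: "('p, 'm) cat" and U :: "'p \<Rightarrow> 'o"
  assumes "expansion C Cs U"
    and "reasonable C Cs U"
    and "unique_restrictions C Cs U"
    and "all_mono C"
    and "A \<in> Ob C"
  shows "ramsey_deg C A \<le> esum (ramsey_deg Cs) (preimage_ob Cs U A) \<and>
           (finite (preimage_ob Cs U A) \<and> (\<forall>As\<in>preimage_ob Cs U A. ramsey_deg Cs As < \<infinity>)
           \<longrightarrow> ramsey_deg C A < \<infinity>)"
proof (cases "finite (preimage_ob Cs U A) \<and> (\<forall>As\<in>preimage_ob Cs U A. ramsey_deg Cs As < \<infinity>)")
  case True
  then have bounds: "ramsey_deg C A \<le> esum (ramsey_deg Cs) (preimage_ob Cs U A)"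
    "esum (ramsey_deg Cs) (preimage_ob Cs U A) < \<infinity>"
    using ramsey_deg_le_esum_preimage[OF assms(1,3,5)] by blast+
  then show ?thesis
    using order.strict_trans1[OF bounds] by blast
next
  case False
  then have "esum (ramsey_deg Cs) (preimage_ob Cs U A) = \<infinity>"
    by (rule esum_eq_infinity)
  with False show ?thesis
    by (simp only: enat_ord_simps(3) simp_thms)
qed

end
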